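(* Let $p\in\mathbb R^I$ be a probability vector with positive entries, and for $i\in\mathcal I$ define $$R_i:=\frac{\sum_{j\in\mathcal J}\mathfrak d(i,j)\theta_j-\sum_{\ell\in\mathcal I}\mathfrak d(i,\ell)\hat\lambda_\ell}{p_i}.$$ If $\vartheta_p\neq0$, then all $R_i$ are nonzero and $\dfrac1{\vartheta_p}=\sum_{i\in\mathcal I}\dfrac1{R_i}$.
   Context: Network and parameters: $\mathcal I=\{1,\dots,I\}$ (customer classes), $\mathcal J=\{1,\dots,J\}$ (server pools), and $\mathcal E\subset\mathcal I\times\mathcal J$ is a set of edges such that the bipartite graph $\mathcal G=(\mathcal I\cup\mathcal J,\mathcal E)$ is a tree. Write $i\sim j$ iff $(i,j)\in\mathcal E$, $\mathcal J(i)=\{j:i\sim j\}$, $\mathcal I(j)=\{i:i\sim j\}$. $\mathbb R^{\mathcal G}$ denotes the arrays $[\xi_{ij}]\in\mathbb R^{I\times J}$ with $\xi_{ij}=0$ whenever $i\not\sim j$, and $\mathbb R^{\mathcal G}_+$ its elements with nonnegative entries. For each $n\in\mathbb N$ there are arrival rates $\lambda^n_i>0$, service rates $\mu^n_{ij}>0$ ($i\sim j$) and pool sizes $N^n_j\in\mathbb N$, such that as $n\to\infty$: $\lambda^n_i/n\to\lambda_i>0$, $N^n_j/n\to\nu_j>0$, $\mu^n_{ij}\to\mu_{ij}>0$, $\hat\lambda^n_i:=(\lambda^n_i-n\lambda_i)/\sqrt n\to\hat\lambda_i\in\mathbb R$, $\hat\mu^n_{ij}:=\sqrt n(\mu^n_{ij}-\mu_{ij})\to\hat\mu_{ij}\in\mathbb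 R$, $\hat\nu^n_j:=\sqrt n(N^n_j/n-\nu_j)\to\hat\nu_j\in\mathbb R$. Complete resource pooling is assumed: the linear program "minimize $\max_{j}\sum_i\xi_{ij}$ over $\xi\in\mathbb R^{\mathcal G}_+$ subject to $\sum_j\mu_{ij}\nu_j\xi_{ij}=\lambda_i$ for all $i$" has a unique solution $\xi^*$, and it satisfies $\sum_{i}\xi^*_{ij}=1$ for all $j$ and $\xi^*_{ij}>0$ for all $i\sim j$. Put $z^*_{ij}:=\xi^*_{ij}\nu_j$ and $\theta_j:=\hat\nu_j+\sum_{i\in\mathcal I(j)}(\hat\mu_{ij}/\mu_{ij})z^*_{ij}$. SWSS parameter: for a probability vector $p\in\mathbb R^I$ with positive entries, $\vartheta_p$ is the (unique) optimal value of the linear program: maximize $\vartheta$ over $(\vartheta,\kappa)\in\mathbb R\times\mathbb R^{\mathcal G}$ subject to $\hat\lambda_i\le\sum_{j\in\mathcal J(i)}\mu_{ij}\kappa_{ij}-\vartheta p_i$ for all $i\in\mathcal I$ and $\sum_{i\in\mathcal I(j)}\kappa_{ij}=\theta_j$ for all $j\in\mathcal J$. Gains: for $i\in\mathcal I$, $j\in\mathcal J$, let $(i_1,j_1,i_2,j_2,\dots,i_m,j_m)$ be the unique shortest path in $\mathcal G$ from $i=i_1$ to $j=j_m$, and set $\mathfrak d(i,j):=\mu_{i_1j_1}\prod_{k=1}^{m-1}\mu_{i_{k+1}j_{k+1}}/\mu_{i_{k+1}j_k}$. For $i\ne i'$ in $\mathcal I$ with shortest path $(i_1,j_1,\dots,j_{m-1},i_m)$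 from $i=i_1$ to $i'=i_m$, set $\mathfrak d(i,i'):=\prod_{k=1}^{m-1}\mu_{i_kj_k}/\mu_{i_{k+1}j_k}$; and $\mathfrak d(i,i):=1$. *)

theory Defs
  imports "HOL-Analysis.Analysis"
begin

text \<open>Conventions: customer classes are 0,...,nI-1, server pools are 0,...,nJ-1.
  The edge set E is a set of pairs (i,j) (class i, pool j). Arrays in R^G are
  functions nat => nat => real.\<close>

definition graph_vertices :: "nat \<Rightarrow> nat \<Rightarrow> (nat + nat) set" where
  "graph_vertices nI nJ = Inl ` {..<nI} \<union> Inr ` {..<nJ}"

definition graph_adj :: "(nat \<times> nat) set \<Rightarrow> nat + nat \<Rightarrow> nat + nat \<Rightarrow> bool" where
  "graph_adj E u v = (\<exists>i j. (i, j) \<in> E \<and> ((u = Inl i \<and> v = Inr j) \<or> (u = Inr j \<and> v = Inl i)))"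

definition graph_connected :: "nat \<Rightarrow> nat \<Rightarrow> (nat \<times> nat) set \<Rightarrow> bool" where
  "graph_connected nI nJ E =
     (\<forall>u \<in> graph_vertices nI nJ. \<forall>v \<in> graph_vertices nI nJ. (graph_adj E)\<^sup>*\<^sup>* u v)"

definition graph_acyclic :: "(nat \<times> nat) set \<Rightarrow> bool" where
  "graph_acyclic E =
     (\<not> (\<exists>cs. length cs \<ge> 3 \<and> distinct cs \<and>
            (\<forall>k < length cs. graph_adj E (cs ! k) (cs ! ((k + 1) mod length cs)))))"

definition is_tree :: "nat \<Rightarrow> nat \<Rightarrow> (nat \<times> nat) set \<Rightarrow> bool" where
  "is_tree nI nJ E = (E \<subseteq> {..<nI} \<times> {..<nJ} \<and> graph_connected nI nJ E \<and> graph_acyclic E)"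

text \<open>A path (i_1,j_1,...,i_m,j_m) from class i to pool j, stored as lists
  is = [i_1..i_m], js = [j_1..j_m] (0-based).\<close>
definition cp_path :: "(nat \<times> nat) set \<Rightarrow> nat \<Rightarrow> nat \<Rightarrow> nat \<Rightarrow> nat list \<Rightarrow> nat list \<Rightarrow> bool" where
  "cp_path E i j m is js =
     (m \<ge> 1 \<and> length is = m \<and> length js = m \<and> is ! 0 = i \<and> js ! (m - 1) = j \<and>
      (\<forall>k < m. (is ! k, js ! k) \<in> E) \<and> (\<forall>k < m - 1. (is ! (k + 1), js ! k) \<in> E))"

definition cp_shortest :: "(nat \<times> nat) set \<Rightarrow> nat \<Rightarrow> nat \<Rightarrow> nat \<Rightarrow> nat list \<Rightarrow> nat list \<Rightarrow> bool" where
  "cp_shortest E i j m is js =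
     (cp_path E i j m is js \<and> (\<forall>m' is' js'. cp_path E i j m' is' js' \<longrightarrow> m \<le> m'))"

text \<open>A path (i_1,j_1,...,j_{m-1},i_m) from class i to class i'.\<close>
definition cc_path :: "(nat \<times> nat) set \<Rightarrow> nat \<Rightarrow> nat \<Rightarrow> nat \<Rightarrow> nat list \<Rightarrow> nat list \<Rightarrow> bool" where
  "cc_path E i i' m is js =
     (m \<ge> 1 \<and> length is = m \<and> length js = m - 1 \<and> is ! 0 = i \<and> is ! (m - 1) = i' \<and>
      (\<forall>k < m - 1. (is ! k, js ! k) \<in> E \<and> (is ! (k + 1), js ! k) \<in> E))"

definition cc_shortest :: "(nat \<times> nat) set \<Rightarrow> nat \<Rightarrow> nat \<Rightarrow> nat \<Rightarrow> nat list \<Rightarrow> nat list \<Rightarrow> bool" where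
  "cc_shortest E i i' m is js =
     (cc_path E i i' m is js \<and> (\<forall>m' is' js'. cc_path E i i' m' is' js' \<longrightarrow> m \<le> m'))"

text \<open>Gain d(i,j) from class i to pool j, along the unique shortest path.\<close>
definition gain_cp :: "(nat \<times> nat) set \<Rightarrow> (nat \<Rightarrow> nat \<Rightarrow> real) \<Rightarrow> nat \<Rightarrow> nat \<Rightarrow> real" where
  "gain_cp E mu i j =
     (case (THE (m, is, js). cp_shortest E i j m is js) of (m, is, js) \<Rightarrow>
        mu (is ! 0) (js ! 0) * (\<Prod>k \<in> {1..<m}. mu (is ! k) (js ! k) / mu (is ! k) (js ! (k - 1))))"

definition gain_cc :: "(nat \<times> nat) set \<Rightarrow> (nat \<Rightarrow> nat \<Rightarrow> real) \<Rightarrow> nat \<Rightarrow> nat \<Rightarrow> real" where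
  "gain_cc E mu i i' =
     (if i = i' then 1 else
       (case (THE (m, is, js). cc_shortest E i i' m is js) of (m, is, js) \<Rightarrow>
          (\<Prod>k < m - 1. mu (is ! k) (js ! k) / mu (is ! (k + 1)) (js ! k))))"

definition crp_feasible ::
  "nat \<Rightarrow> nat \<Rightarrow> (nat \<times> nat) set \<Rightarrow> (nat \<Rightarrow> nat \<Rightarrow> real) \<Rightarrow> (nat \<Rightarrow> real) \<Rightarrow> (nat \<Rightarrow> real)
   \<Rightarrow> (nat \<Rightarrow> nat \<Rightarrow> real) \<Rightarrow> bool" where
  "crp_feasible nI nJ E mu nu lam \<xi> =
     ((\<forall>i < nI. \<forall>j < nJ. \<xi> i j \<ge> 0 \<and> ((i, j) \<notin> E \<longrightarrow> \<xi> i j = 0)) \<and>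
      (\<forall>i < nI. (\<Sum>j < nJ. mu i j * nu j * \<xi> i j) = lam i))"

definition crp_objective :: "nat \<Rightarrow> nat \<Rightarrow> (nat \<Rightarrow> nat \<Rightarrow> real) \<Rightarrow> real" where
  "crp_objective nI nJ \<xi> = Max ((\<lambda>j. \<Sum>i < nI. \<xi> i j) ` {..<nJ})"

definition crp_optimal ::
  "nat \<Rightarrow> nat \<Rightarrow> (nat \<times> nat) set \<Rightarrow> (nat \<Rightarrow> nat \<Rightarrow> real) \<Rightarrow> (nat \<Rightarrow> real) \<Rightarrow> (nat \<Rightarrow> real)
   \<Rightarrow> (nat \<Rightarrow> nat \<Rightarrow> real) \<Rightarrow> bool" where
  "crp_optimal nI nJ E mu nu lam \<xi> =
     (crp_feasible nI nJ E mu nu lam \<xi> \<and>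
      (\<forall>\<xi>'. crp_feasible nI nJ E mu nu lam \<xi>' \<longrightarrow> crp_objective nI nJ \<xi> \<le> crp_objective nI nJ \<xi>'))"

definition theta_param ::
  "nat \<Rightarrow> (nat \<times> nat) set \<Rightarrow> (nat \<Rightarrow> nat \<Rightarrow> real) \<Rightarrow> (nat \<Rightarrow> real) \<Rightarrow> (nat \<Rightarrow> nat \<Rightarrow> real)
   \<Rightarrow> (nat \<Rightarrow> real) \<Rightarrow> (nat \<Rightarrow> nat \<Rightarrow> real) \<Rightarrow> nat \<Rightarrow> real" where
  "theta_param nI E mu nu mu_hat nu_hat \<xi>s j =
     nu_hat j + (\<Sum>i \<in> {i. i < nI \<and> (i, j) \<in> E}. (mu_hat i j / mu i j) * (\<xi>s i j * nu j))"

definition swss_feasible ::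
  "nat \<Rightarrow> nat \<Rightarrow> (nat \<times> nat) set \<Rightarrow> (nat \<Rightarrow> nat \<Rightarrow> real) \<Rightarrow> (nat \<Rightarrow> real) \<Rightarrow> (nat \<Rightarrow> real)
   \<Rightarrow> (nat \<Rightarrow> real) \<Rightarrow> real \<Rightarrow> (nat \<Rightarrow> nat \<Rightarrow> real) \<Rightarrow> bool" where
  "swss_feasible nI nJ E mu lam_hat theta p vt \<kappa> =
     ((\<forall>i < nI. \<forall>j < nJ. (i, j) \<notin> E \<longrightarrow> \<kappa> i j = 0) \<and>
      (\<forall>i < nI. lam_hat i \<le> (\<Sum>j \<in> {j. j < nJ \<and> (i, j) \<in> E}. mu i j * \<kappa> i j) - vt * p i) \<and>
      (\<forall>j < nJ. (\<Sum>i \<in> {i. i < nI \<and> (i, j) \<in> E}. \<kappa> i j) = theta j))"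

definition swss_param ::
  "nat \<Rightarrow> nat \<Rightarrow> (nat \<times> nat) set \<Rightarrow> (nat \<Rightarrow> nat \<Rightarrow> real) \<Rightarrow> (nat \<Rightarrow> real) \<Rightarrow> (nat \<Rightarrow> real)
   \<Rightarrow> (nat \<Rightarrow> real) \<Rightarrow> real" where
  "swss_param nI nJ E mu lam_hat theta p =
     Sup {vt. \<exists>\<kappa>. swss_feasible nI nJ E mu lam_hat theta p vt \<kappa>}"

end

theory Submission
  imports Defs
begin

text \<open>Root the tree at class 0. The product of the service rates met forwards along the path
  from the root to a vertex, divided by those met backwards, is a positive potential, w i on
  classes and v j on pools, with v j = w i * mu i j on every edge. Gains telescope along paths:
  d(i,j) = v j / w i and d(i,i') = w i' / w i, so R i = (sum_j v j theta j - sum_l w l lam_hat l)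
  / (w i p i). Weighting the class constraints of the SWSS program by w and summing the pool
  constraints shows vt * sum_i w i p i <= sum_j v j theta j - sum_i w i lam_hat i for every
  feasible vt; equality is attained because balanced supplies and demands on a connected
  bipartite graph are carried by a flow along its edges. Hence the SWSS parameter is this
  difference divided by sum_i w i p i, and its reciprocal is sum_i 1 / R i.\<close>

section \<open>Walks in the class-pool graph\<close>

lemma graph_adj_sym: "graph_adj E u v \<longleftrightarrow> graph_adj E v u"
  unfolding graph_adj_def by blast

lemma graph_adj_simps [simp]:
  "graph_adj E (Inl i) (Inr j) \<longleftrightarrow> (i, j) \<in> E"
  "graph_adj E (Inr j) (Inl i) \<longleftrightarrow> (i, j) \<in> E"
  "\<not> graph_adj E (Inl i) (Inl i')"
  "\<not> graph_adj E (Inr j) (Inr j')"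
  unfolding graph_adj_def by auto

lemma graph_adj_isl: "graph_adj E u v \<Longrightarrow> isl v \<longleftrightarrow> \<not> isl u"
  by (cases u; cases v) auto

lemma successively_graph_adj_rev [simp]:
  "successively (graph_adj E) (rev vs) \<longleftrightarrow> successively (graph_adj E) vs"
proof -
  have "(\<lambda>x y. graph_adj E y x) = graph_adj E"
    by (auto simp: fun_eq_iff graph_adj_sym)
  then show ?thesis by (metis successively_rev)
qed

definition walk :: "(nat \<times> nat) set \<Rightarrow> (nat + nat) list \<Rightarrow> bool" where
  "walk E vs \<longleftrightarrow> vs \<noteq> [] \<and> successively (graph_adj E) vs"

lemma walk_conv_nth:
  "walk E vs \<longleftrightarrow> vs \<noteq> [] \<and> (\<forall>k. Suc k < length vs \<longrightarrow> graph_adj E (vs ! k) (vs ! Suc k))"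
  by (simp add: walk_def successively_conv_nth)

lemma walk_snoc: "walk E vs \<Longrightarrow> graph_adj E (last vs) v \<Longrightarrow> walk E (vs @ [v])"
  by (auto simp: walk_def successively_append_iff)

lemma walk_appendD: "walk E (vs @ ws) \<Longrightarrow> vs \<noteq> [] \<Longrightarrow> walk E vs"
  by (simp add: walk_def successively_append_iff)

lemma walk_if_rtranclp:
  assumes "(graph_adj E)\<^sup>*\<^sup>* u v"
  shows "\<exists>vs. walk E vs \<and> hd vs = u \<and> last vs = v"
  using assms
proof (induction rule: rtranclp_induct)
  case base
  show ?case by (rule exI[of _ "[u]"]) (simp add: walk_def)
next
  case (step y z)
  then obtain vs where "walk E vs" "hd vs = u" "last vs = y" by blast
  with step.hyps(2) show ?case
    by (intro exI[of _ "vs @ [z]"]) (auto simp: walk_def successively_append_iff)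
qed

lemma walk_shortcut:
  assumes "walk E vs" "\<not> distinct vs"
  shows "\<exists>vs'. walk E vs' \<and> hd vs' = hd vs \<and> last vs' = last vs \<and> length vs' < length vs"
proof -
  obtain xs ys zs y where vs: "vs = xs @ [y] @ ys @ [y] @ zs"
    using not_distinct_decomp[OF assms(2)] by blast
  have "successively (graph_adj E) ((xs @ [y]) @ ys @ [y] @ zs)"
    using assms(1) by (simp add: walk_def vs)
  then have "successively (graph_adj E) (xs @ [y])"
    by (simp only: successively_append_iff)
  moreover have "successively (graph_adj E) ((xs @ [y] @ ys) @ (y # zs))"
    using assms(1) by (simp add: walk_def vs)
  then have "successively (graph_adj E) (y # zs)"
    by (simp only: successively_append_iff)
  ultimately have "successively (graph_adj E) ((xs @ [y]) @ zs)"
    by (auto simp: successively_append_iff successively_Cons)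
  then show ?thesis
    by (intro exI[of _ "xs @ [y] @ zs"]) (auto simp: walk_def vs hd_append)
qed

lemma distinct_walk_exists:
  "walk E vs \<Longrightarrow> \<exists>vs'. walk E vs' \<and> distinct vs' \<and> hd vs' = hd vs \<and> last vs' = last vs"
proof (induction "length vs" arbitrary: vs rule: less_induct)
  case less
  show ?case
  proof (cases "distinct vs")
    case False
    with less.prems obtain vs' where
      "walk E vs'" "hd vs' = hd vs" "last vs' = last vs" "length vs' < length vs"
      using walk_shortcut by blast
    with less.hyps[of vs'] show ?thesis by fastforce
  qed (use less.prems in blast)
qed

lemma acyclic_no_closing_edge:
  assumes "graph_acyclic E" "walk E cs" "distinct cs" "3 \<le> length cs"
  shows "\<not> graph_adj E (last cs) (hd cs)"
proof
  assume closing: "graph_adj E (last cs) (hd cs)"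
  have "graph_adj E (cs ! k) (cs ! ((k + 1) mod length cs))" if k: "k < length cs" for k
  proof (cases "Suc k < length cs")
    case True
    then show ?thesis using assms(2) by (simp add: walk_conv_nth)
  next
    case False
    with k have "k = length cs - 1" "Suc k = length cs" by simp_all
    with closing assms(2) show ?thesis by (simp add: walk_def hd_conv_nth last_conv_nth)
  qed
  with assms(1,3,4) show False unfolding graph_acyclic_def by blast
qed

text \<open>Two walks that leave u through different neighbours a and b and first meet again at x
  close the cycle u, a, ..., x, ..., b.\<close>

lemma acyclic_walks_same_second:
  assumes acyc: "graph_acyclic E"
    and walks: "walk E (u # xs)" "walk E (u # ys)" "distinct (u # xs)" "distinct (u # ys)"
    and "xs = a # xs'" "ys = b # ys'" "last xs = last ys"
  shows "a = b"
proof (rule ccontr)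
  assume "a \<noteq> b"
  have "walk E xs" "walk E ys" "graph_adj E u a" "graph_adj E u b"
    using walks \<open>xs = a # xs'\<close> \<open>ys = b # ys'\<close> by (auto simp: walk_def)
  have "last xs \<in> set ys" using assms(6-8) by (metis last_in_set list.distinct(1))
  then obtain pre x post where xs: "xs = pre @ x # post" and "x \<in> set ys"
    and pre: "\<forall>y \<in> set pre. y \<notin> set ys"
    using split_list_first_prop[of xs "\<lambda>z. z \<in> set ys"] assms(6) by (metis last_in_set list.distinct(1))
  then obtain q1 q2 where ys: "ys = q1 @ x # q2" by (metis split_list)
  define cs where "cs = u # pre @ x # rev q1"
  have "walk E (pre @ [x])"
    using \<open>walk E xs\<close> xs walk_appendD[of E "pre @ [x]" post] by simp
  moreover have "walk E (q1 @ [x])"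
    using \<open>walk E ys\<close> ys walk_appendD[of E "q1 @ [x]" q2] by simp
  then have "walk E (rev (q1 @ [x]))"
    unfolding walk_def successively_graph_adj_rev by simp
  ultimately have "successively (graph_adj E) ((pre @ [x]) @ rev q1)"
    by (auto simp: walk_def successively_append_iff successively_Cons)
  moreover have "hd (pre @ [x] @ rev q1) = a" using xs assms(6) by (cases pre) auto
  ultimately have "walk E cs"
    using \<open>graph_adj E u a\<close> by (simp add: cs_def walk_def successively_Cons)
  moreover have "distinct cs"
    using walks(3,4) xs ys pre by (auto simp: cs_def)
  moreover have "3 \<le> length cs"
    using xs ys assms(6,7) \<open>a \<noteq> b\<close> by (cases pre; cases q1) (auto simp: cs_def)
  moreover have "last cs = b"
    using ys assms(7) by (cases q1) (auto simp: cs_def last_rev)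
  ultimately show False
    using acyclic_no_closing_edge[OF acyc] \<open>graph_adj E u b\<close> graph_adj_sym by (fastforce simp: cs_def)
qed

lemma acyclic_distinct_walk_unique:
  assumes acyc: "graph_acyclic E"
  shows "walk E xs \<Longrightarrow> walk E ys \<Longrightarrow> distinct xs \<Longrightarrow> distinct ys \<Longrightarrow>
         hd xs = hd ys \<Longrightarrow> last xs = last ys \<Longrightarrow> xs = ys"
proof (induction xs arbitrary: ys)
  case Nil
  then show ?case by (simp add: walk_def)
next
  case (Cons u xs')
  obtain ys' where ys: "ys = u # ys'"
    using Cons.prems by (cases ys) (auto simp: walk_def)
  consider "xs' = []" | "ys' = []" | a xs2 b ys2 where "xs' = a # xs2" "ys' = b # ys2"
    by (meson list.exhaust)
  then show ?case
  proof cases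
    case 1
    with Cons.prems ys show ?thesis by (cases ys' rule: rev_cases) auto
  next
    case 2
    with Cons.prems ys show ?thesis by (cases xs' rule: rev_cases) auto
  next
    case (3 a xs2 b ys2)
    with Cons.prems ys have "a = b"
      by (intro acyclic_walks_same_second[OF acyc, of u xs' ys' a xs2 b ys2]) auto
    with Cons.IH[of ys'] Cons.prems ys 3 show ?thesis by (auto simp: walk_def)
  qed
qed

section \<open>Class-pool paths as alternating walks\<close>

text \<open>cp_path and cc_path store a path as its list as of classes and list bs of pools;
  alt_walk n as bs is the vertex list Inl (as ! 0), Inr (bs ! 0), Inl (as ! 1), ... of length n.\<close>

definition alt_walk :: "nat \<Rightarrow> nat list \<Rightarrow> nat list \<Rightarrow> (nat + nat) list" where
  "alt_walk n as bs = map (\<lambda>k. if even k then Inl (as ! (k div 2)) else Inr (bs ! (k div 2))) [0..<n]"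

lemma length_alt_walk [simp]: "length (alt_walk n as bs) = n"
  by (simp add: alt_walk_def)

lemma nth_alt_walk:
  "k < n \<Longrightarrow> alt_walk n as bs ! k = (if even k then Inl (as ! (k div 2)) else Inr (bs ! (k div 2)))"
  by (simp add: alt_walk_def)

lemma hd_alt_walk: "0 < n \<Longrightarrow> hd (alt_walk n as bs) = Inl (as ! 0)"
  by (simp add: alt_walk_def hd_map upt_conv_Cons)

lemma last_alt_walk: "0 < n \<Longrightarrow> last (alt_walk n as bs) = alt_walk n as bs ! (n - 1)"
  by (simp add: last_conv_nth flip: length_greater_0_conv)

lemma walk_alt_walk_iff:
  assumes "0 < n"
  shows "walk E (alt_walk n as bs) \<longleftrightarrow>
    (\<forall>k. 2 * k + 1 < n \<longrightarrow> (as ! k, bs ! k) \<in> E) \<and> (\<forall>k. 2 * k + 2 < n \<longrightarrow> (as ! (k + 1), bs ! k) \<in> E)"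
proof -
  have step: "graph_adj E (alt_walk n as bs ! k) (alt_walk n as bs ! Suc k) \<longleftrightarrow>
      (if even k then (as ! (k div 2), bs ! (k div 2)) \<in> E else (as ! (k div 2 + 1), bs ! (k div 2)) \<in> E)"
    if "Suc k < n" for k
    using that by (auto simp: nth_alt_walk elim!: evenE oddE)
  show ?thesis
  proof
    assume "walk E (alt_walk n as bs)"
    then have "\<And>k. Suc k < n \<Longrightarrow> graph_adj E (alt_walk n as bs ! k) (alt_walk n as bs ! Suc k)"
      by (simp add: walk_conv_nth)
    from this[of "2 * _"] this[of "2 * _ + 1"] show "(\<forall>k. 2 * k + 1 < n \<longrightarrow> (as ! k, bs ! k) \<in> E) \<and>
      (\<forall>k. 2 * k + 2 < n \<longrightarrow> (as ! (k + 1), bs ! k) \<in> E)"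
      by (auto simp: step)
  next
    assume edges: "(\<forall>k. 2 * k + 1 < n \<longrightarrow> (as ! k, bs ! k) \<in> E) \<and>
      (\<forall>k. 2 * k + 2 < n \<longrightarrow> (as ! (k + 1), bs ! k) \<in> E)"
    have "graph_adj E (alt_walk n as bs ! k) (alt_walk n as bs ! Suc k)" if "Suc k < n" for k
      using step[OF that] edges that by (auto elim!: evenE oddE)
    with assms show "walk E (alt_walk n as bs)"
      by (auto simp: walk_conv_nth alt_walk_def)
  qed
qed

lemma walk_isl_nth:
  assumes "walk E vs" "isl (hd vs)" "k < length vs"
  shows "isl (vs ! k) \<longleftrightarrow> even k"
  using assms(3)
proof (induction k)
  case 0
  with assms(1,2) show ?case by (simp add: hd_conv_nth walk_def)
next
  case (Suc k)
  with assms(1) have "graph_adj E (vs ! k) (vs ! Suc k)" by (simp add: walk_conv_nth)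
  with Suc show ?case by (simp add: graph_adj_isl)
qed

lemma walk_eq_alt_walk:
  assumes "walk E vs" "isl (hd vs)"
  shows "\<exists>as bs. vs = alt_walk (length vs) as bs \<and>
    length as = (length vs + 1) div 2 \<and> length bs = length vs div 2"
proof (intro exI conjI)
  let ?as = "map (\<lambda>t. projl (vs ! (2 * t))) [0..<(length vs + 1) div 2]"
  let ?bs = "map (\<lambda>t. projr (vs ! (2 * t + 1))) [0..<length vs div 2]"
  show "vs = alt_walk (length vs) ?as ?bs"
  proof (rule nth_equalityI)
    fix k assume k: "k < length vs"
    have "isl (vs ! k) \<longleftrightarrow> even k" using walk_isl_nth[OF assms k] .
    moreover have "k div 2 < (length vs + 1) div 2" "odd k \<Longrightarrow> k div 2 < length vs div 2"
      using k by (auto elim!: oddE)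
    ultimately show "vs ! k = alt_walk (length vs) ?as ?bs ! k"
      using k by (auto simp: nth_alt_walk elim!: evenE oddE)
  qed simp
qed simp_all

lemma alt_walk_inj:
  assumes "alt_walk n as bs = alt_walk n as' bs'"
    and "length as = (n + 1) div 2" "length as' = (n + 1) div 2"
    and "length bs = n div 2" "length bs' = n div 2"
  shows "as = as' \<and> bs = bs'"
proof
  show "as = as'"
  proof (rule nth_equalityI)
    fix t assume "t < length as"
    then have "2 * t < n" using assms(2) by linarith
    then show "as ! t = as' ! t" using arg_cong[OF assms(1), of "\<lambda>w. w ! (2 * t)"]
      by (simp add: nth_alt_walk)
  qed (use assms in simp)
  show "bs = bs'"
  proof (rule nth_equalityI)
    fix t assume "t < length bs"
    then have "2 * t + 1 < n" using assms(4) by linarith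
    then show "bs ! t = bs' ! t" using arg_cong[OF assms(1), of "\<lambda>w. w ! (2 * t + 1)"]
      by (simp add: nth_alt_walk)
  qed (use assms in simp)
qed

lemma cp_path_iff_walk:
  "cp_path E i j m as bs \<longleftrightarrow> 1 \<le> m \<and> length as = m \<and> length bs = m \<and>
     walk E (alt_walk (2 * m) as bs) \<and> hd (alt_walk (2 * m) as bs) = Inl i \<and>
     last (alt_walk (2 * m) as bs) = Inr j"
proof (cases "1 \<le> m")
  case True
  have "2 * k + 1 < 2 * m \<longleftrightarrow> k < m" "2 * k + 2 < 2 * m \<longleftrightarrow> k < m - 1" for k
    by linarith+
  moreover have "2 * m - 1 = 2 * (m - 1) + 1" using True by simp
  ultimately show ?thesis using True
    by (auto simp: cp_path_def walk_alt_walk_iff hd_alt_walk last_alt_walk nth_alt_walk)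
qed (simp add: cp_path_def)

lemma cc_path_iff_walk:
  "cc_path E i i' m as bs \<longleftrightarrow> 1 \<le> m \<and> length as = m \<and> length bs = m - 1 \<and>
     walk E (alt_walk (2 * m - 1) as bs) \<and> hd (alt_walk (2 * m - 1) as bs) = Inl i \<and>
     last (alt_walk (2 * m - 1) as bs) = Inl i'"
proof (cases "1 \<le> m")
  case True
  have "2 * k + 1 < 2 * m - 1 \<longleftrightarrow> k < m - 1" "2 * k + 2 < 2 * m - 1 \<longleftrightarrow> k < m - 1" for k
    using True by linarith+
  moreover have "2 * m - 1 - 1 = 2 * (m - 1)" using True by simp
  ultimately show ?thesis using True
    by (auto simp: cc_path_def walk_alt_walk_iff hd_alt_walk last_alt_walk nth_alt_walk)
qed (simp add: cc_path_def)

lemma cp_path_of_walk: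
  assumes "walk E vs" "hd vs = Inl i" "last vs = Inr j"
  shows "\<exists>m as bs. cp_path E i j m as bs \<and> length vs = 2 * m"
proof -
  obtain as bs where vs: "vs = alt_walk (length vs) as bs"
    and len: "length as = (length vs + 1) div 2" "length bs = length vs div 2"
    using walk_eq_alt_walk[OF assms(1)] assms(2) by auto
  have ne: "vs \<noteq> []" using assms(1) by (simp add: walk_def)
  then have "isl (vs ! (length vs - 1)) \<longleftrightarrow> even (length vs - 1)"
    using walk_isl_nth[OF assms(1)] assms(2) by simp
  then have "odd (length vs - 1)" using assms(3) ne by (simp add: last_conv_nth)
  then have "even (length vs)" using ne by (cases "length vs") auto
  then obtain m where m: "length vs = 2 * m" by blast
  with ne have "1 \<le> m" by (cases m) auto
  with m show ?thesis
    using assms len vs cp_path_iff_walk[of E i j m as bs] by (intro exI[of _ m]) auto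
qed

lemma cc_path_of_walk:
  assumes "walk E vs" "hd vs = Inl i" "last vs = Inl i'"
  shows "\<exists>m as bs. cc_path E i i' m as bs \<and> length vs = 2 * m - 1"
proof -
  obtain as bs where vs: "vs = alt_walk (length vs) as bs"
    and len: "length as = (length vs + 1) div 2" "length bs = length vs div 2"
    using walk_eq_alt_walk[OF assms(1)] assms(2) by auto
  have ne: "vs \<noteq> []" using assms(1) by (simp add: walk_def)
  then have "isl (vs ! (length vs - 1)) \<longleftrightarrow> even (length vs - 1)"
    using walk_isl_nth[OF assms(1)] assms(2) by simp
  then have "even (length vs - 1)" using assms(3) ne by (simp add: last_conv_nth)
  then obtain m where m: "length vs = 2 * m - 1" "1 \<le> m"
    using ne by (intro that[of "(length vs + 1) div 2"]) (auto elim!: evenE)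
  with len have "length as = m" "length bs = m - 1" by auto
  with m show ?thesis
    using assms vs cc_path_iff_walk[of E i i' m as bs] by (intro exI[of _ m]) auto
qed

section \<open>Shortest paths and gains\<close>

lemma cp_shortest_distinct:
  assumes "cp_shortest E i j m as bs"
  shows "distinct (alt_walk (2 * m) as bs)"
proof (rule ccontr)
  assume "\<not> distinct (alt_walk (2 * m) as bs)"
  moreover have "walk E (alt_walk (2 * m) as bs)" "hd (alt_walk (2 * m) as bs) = Inl i"
    "last (alt_walk (2 * m) as bs) = Inr j"
    using assms by (simp_all add: cp_shortest_def cp_path_iff_walk)
  ultimately obtain vs where "walk E vs" "hd vs = Inl i" "last vs = Inr j" "length vs < 2 * m"
    using walk_shortcut by fastforce
  then obtain m' as' bs' where "cp_path E i j m' as' bs'" "m' < m"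
    using cp_path_of_walk by fastforce
  with assms show False unfolding cp_shortest_def by (meson not_le)
qed

lemma cc_shortest_distinct:
  assumes "cc_shortest E i i' m as bs"
  shows "distinct (alt_walk (2 * m - 1) as bs)"
proof (rule ccontr)
  assume "\<not> distinct (alt_walk (2 * m - 1) as bs)"
  moreover have "walk E (alt_walk (2 * m - 1) as bs)" "hd (alt_walk (2 * m - 1) as bs) = Inl i"
    "last (alt_walk (2 * m - 1) as bs) = Inl i'"
    using assms by (simp_all add: cc_shortest_def cc_path_iff_walk)
  ultimately obtain vs where "walk E vs" "hd vs = Inl i" "last vs = Inl i'" "length vs < 2 * m - 1"
    using walk_shortcut by fastforce
  then obtain m' as' bs' where "cc_path E i i' m' as' bs'" "m' < m"
    using cc_path_of_walk by fastforce
  with assms show False unfolding cc_shortest_def by (meson not_le)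
qed

lemma cp_shortest_unique:
  assumes "graph_acyclic E" "cp_shortest E i j m as bs" "cp_shortest E i j m' as' bs'"
  shows "(m, as, bs) = (m', as', bs')"
proof -
  have "m = m'" using assms(2,3) unfolding cp_shortest_def by (meson le_antisym)
  then have paths: "cp_path E i j m as bs" "cp_path E i j m as' bs'"
    and "distinct (alt_walk (2 * m) as bs)" "distinct (alt_walk (2 * m) as' bs')"
    using assms(2,3) cp_shortest_distinct by (auto simp: cp_shortest_def)
  then have "alt_walk (2 * m) as bs = alt_walk (2 * m) as' bs'"
    by (intro acyclic_distinct_walk_unique[OF assms(1)]) (simp_all add: cp_path_iff_walk)
  with paths \<open>m = m'\<close> show ?thesis
    using alt_walk_inj[of "2 * m" as bs as' bs'] by (simp add: cp_path_iff_walk)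
qed

lemma cc_shortest_unique:
  assumes "graph_acyclic E" "cc_shortest E i i' m as bs" "cc_shortest E i i' m' as' bs'"
  shows "(m, as, bs) = (m', as', bs')"
proof -
  have "m = m'" using assms(2,3) unfolding cc_shortest_def by (meson le_antisym)
  then have paths: "cc_path E i i' m as bs" "cc_path E i i' m as' bs'"
    and "distinct (alt_walk (2 * m - 1) as bs)" "distinct (alt_walk (2 * m - 1) as' bs')"
    using assms(2,3) cc_shortest_distinct by (auto simp: cc_shortest_def)
  then have "alt_walk (2 * m - 1) as bs = alt_walk (2 * m - 1) as' bs'"
    by (intro acyclic_distinct_walk_unique[OF assms(1)]) (simp_all add: cc_path_iff_walk)
  moreover have "(2 * m - 1 + 1) div 2 = m" "(2 * m - 1) div 2 = m - 1"
    using paths by (auto simp: cc_path_def)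
  ultimately show ?thesis using paths \<open>m = m'\<close>
    using alt_walk_inj[of "2 * m - 1" as bs as' bs'] by (simp add: cc_path_iff_walk)
qed

lemma minimal_length_exists:
  fixes P :: "nat \<Rightarrow> 'a \<Rightarrow> 'b \<Rightarrow> bool"
  assumes "P m0 a0 b0"
  shows "\<exists>m a b. P m a b \<and> (\<forall>m' a' b'. P m' a' b' \<longrightarrow> m \<le> m')"
proof -
  define Q where "Q m \<longleftrightarrow> (\<exists>a b. P m a b)" for m
  have "Q m0" using assms by (auto simp: Q_def)
  then have "Q (Least Q)" by (rule LeastI)
  then obtain a b where "P (Least Q) a b" by (auto simp: Q_def)
  moreover have "Least Q \<le> m'" if "P m' a' b'" for m' a' b'
    using that by (intro Least_le) (auto simp only: Q_def)
  ultimately show ?thesis by (intro exI[of _ "Least Q"] exI[of _ a] exI[of _ b]) simp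
qed

lemma THE_triple_eq:
  assumes "S m a b" "\<And>m' a' b'. S m' a' b' \<Longrightarrow> (m', a', b') = (m, a, b)"
  shows "(THE (m, a, b). S m a b) = (m, a, b)"
proof (rule the1_equality)
  show "\<exists>!x. case x of (m, a, b) \<Rightarrow> S m a b"
  proof (rule ex1I[of _ "(m, a, b)"])
    fix x assume "case x of (m, a, b) \<Rightarrow> S m a b"
    then show "x = (m, a, b)" using assms(2) by (cases x) (simp only: case_prod_conv)
  qed (use assms(1) in simp)
qed (use assms(1) in simp)

lemma gain_cp_path_product:
  assumes "graph_acyclic E" "(graph_adj E)\<^sup>*\<^sup>* (Inl i) (Inr j)"
  obtains m as bs where "cp_path E i j m as bs"
    and "gain_cp E mu i j =
      mu (as ! 0) (bs ! 0) * (\<Prod>k \<in> {1..<m}. mu (as ! k) (bs ! k) / mu (as ! k) (bs ! (k - 1)))"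
proof -
  obtain vs where "walk E vs" "hd vs = Inl i" "last vs = Inr j"
    using walk_if_rtranclp[OF assms(2)] by blast
  then obtain m0 as0 bs0 where "cp_path E i j m0 as0 bs0"
    using cp_path_of_walk by blast
  then have "\<exists>m as bs. cp_shortest E i j m as bs"
    unfolding cp_shortest_def by (rule minimal_length_exists)
  then obtain m as bs where s: "cp_shortest E i j m as bs" by blast
  then have "(THE (m, as, bs). cp_shortest E i j m as bs) = (m, as, bs)"
    by (rule THE_triple_eq) (rule cp_shortest_unique[OF assms(1) _ s])
  then have "gain_cp E mu i j =
      mu (as ! 0) (bs ! 0) * (\<Prod>k \<in> {1..<m}. mu (as ! k) (bs ! k) / mu (as ! k) (bs ! (k - 1)))"
    by (simp add: gain_cp_def)
  with s show thesis by (intro that[of m as bs]) (simp_all add: cp_shortest_def)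
qed

lemma gain_cc_path_product:
  assumes "graph_acyclic E" "(graph_adj E)\<^sup>*\<^sup>* (Inl i) (Inl i')" "i \<noteq> i'"
  obtains m as bs where "cc_path E i i' m as bs"
    and "gain_cc E mu i i' = (\<Prod>k < m - 1. mu (as ! k) (bs ! k) / mu (as ! (k + 1)) (bs ! k))"
proof -
  obtain vs where "walk E vs" "hd vs = Inl i" "last vs = Inl i'"
    using walk_if_rtranclp[OF assms(2)] by blast
  then obtain m0 as0 bs0 where "cc_path E i i' m0 as0 bs0"
    using cc_path_of_walk by blast
  then have "\<exists>m as bs. cc_shortest E i i' m as bs"
    unfolding cc_shortest_def by (rule minimal_length_exists)
  then obtain m as bs where s: "cc_shortest E i i' m as bs" by blast
  then have "(THE (m, as, bs). cc_shortest E i i' m as bs) = (m, as, bs)"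
    by (rule THE_triple_eq) (rule cc_shortest_unique[OF assms(1) _ s])
  then have "gain_cc E mu i i' = (\<Prod>k < m - 1. mu (as ! k) (bs ! k) / mu (as ! (k + 1)) (bs ! k))"
    using assms(3) by (simp add: gain_cc_def)
  with s show thesis by (intro that[of m as bs]) (simp_all add: cc_shortest_def)
qed

lemma cp_path_product_telescope:
  fixes mu :: "nat \<Rightarrow> nat \<Rightarrow> real" and v w :: "nat \<Rightarrow> real"
  assumes path: "cp_path E i j m as bs"
    and pot: "\<And>a b. (a, b) \<in> E \<Longrightarrow> 0 < w a \<and> 0 < mu a b \<and> v b = w a * mu a b"
  shows "mu (as ! 0) (bs ! 0) * (\<Prod>k \<in> {1..<m}. mu (as ! k) (bs ! k) / mu (as ! k) (bs ! (k - 1)))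
    = v j / w i"
proof -
  have m: "1 \<le> m" "as ! 0 = i" "bs ! (m - 1) = j"
    and edge: "\<And>k. k < m \<Longrightarrow> (as ! k, bs ! k) \<in> E"
    and back_edge: "\<And>k. k < m - 1 \<Longrightarrow> (as ! (k + 1), bs ! k) \<in> E"
    using path by (auto simp: cp_path_def)
  have mu_eq: "mu a b = v b / w a" if "(a, b) \<in> E" for a b
  proof -
    have "w a \<noteq> 0" "v b = w a * mu a b" using pot[OF that] by auto
    then show ?thesis by simp
  qed
  have v_pos: "0 < v (bs ! k)" if "k < m" for k
    using pot[OF edge[OF that]] by simp
  have "(\<Prod>k \<in> {1..<m}. mu (as ! k) (bs ! k) / mu (as ! k) (bs ! (k - 1)))
      = (\<Prod>k = Suc 0..m - 1. v (bs ! k) / v (bs ! (k - 1)))"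
  proof (rule prod.cong)
    show "{1..<m} = {Suc 0..m - 1}" using m by auto
  next
    fix k assume "k \<in> {Suc 0..m - 1}"
    then have "(as ! k, bs ! k) \<in> E" "(as ! k, bs ! (k - 1)) \<in> E"
      using edge back_edge[of "k - 1"] by auto
    moreover from pot[OF this(1)] have "0 < w (as ! k)" by simp
    ultimately show "mu (as ! k) (bs ! k) / mu (as ! k) (bs ! (k - 1)) = v (bs ! k) / v (bs ! (k - 1))"
      by (simp add: mu_eq)
  qed
  also have "\<dots> = v (bs ! (m - 1)) / v (bs ! 0)"
  proof (rule prod_telescope'')
    fix k assume "k \<in> {0..m - 1}"
    with m(1) have "k < m" by simp
    with v_pos show "v (bs ! k) \<noteq> 0" by (metis order_less_irrefl)
  qed simp
  finally show ?thesis
    using m mu_eq[OF edge[of 0]] v_pos[of 0] by simp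
qed

lemma cc_path_product_telescope:
  fixes mu :: "nat \<Rightarrow> nat \<Rightarrow> real" and v w :: "nat \<Rightarrow> real"
  assumes path: "cc_path E i i' m as bs" and "i \<noteq> i'"
    and pot: "\<And>a b. (a, b) \<in> E \<Longrightarrow> 0 < w a \<and> 0 < mu a b \<and> v b = w a * mu a b"
  shows "(\<Prod>k < m - 1. mu (as ! k) (bs ! k) / mu (as ! (k + 1)) (bs ! k)) = w i' / w i"
proof -
  have m: "1 \<le> m" "as ! 0 = i" "as ! (m - 1) = i'"
    and edges: "\<And>k. k < m - 1 \<Longrightarrow> (as ! k, bs ! k) \<in> E \<and> (as ! (k + 1), bs ! k) \<in> E"
    using path by (auto simp: cc_path_def)
  have "m \<noteq> 1" using m \<open>i \<noteq> i'\<close> by auto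
  have w_pos: "0 < w (as ! k)" if "k \<le> m - 1" for k
  proof (cases "k < m - 1")
    case True
    then show ?thesis using pot edges by blast
  next
    case False
    with that m(1) \<open>m \<noteq> 1\<close> have "k - 1 < m - 1" "k - 1 + 1 = k" by auto
    then show ?thesis using pot edges by metis
  qed
  have "(\<Prod>k < m - 1. mu (as ! k) (bs ! k) / mu (as ! (k + 1)) (bs ! k))
      = (\<Prod>k < m - 1. w (as ! Suc k) / w (as ! k))"
  proof (rule prod.cong)
    fix k assume "k \<in> {..<m - 1}"
    then have "(as ! k, bs ! k) \<in> E" "(as ! Suc k, bs ! k) \<in> E" using edges by auto
    from pot[OF this(1)] pot[OF this(2)]
    have "w (as ! k) \<noteq> 0" "w (as ! Suc k) \<noteq> 0" "mu (as ! Suc k) (bs ! k) \<noteq> 0"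
      "w (as ! k) * mu (as ! k) (bs ! k) = w (as ! Suc k) * mu (as ! Suc k) (bs ! k)"
      by auto
    then show "mu (as ! k) (bs ! k) / mu (as ! (k + 1)) (bs ! k) = w (as ! Suc k) / w (as ! k)"
      by (simp add: field_simps)
  qed simp
  also have "\<dots> = w (as ! (m - 1)) / w (as ! 0)"
    using w_pos by (intro prod_lessThan_telescope) (metis order_less_irrefl)
  finally show ?thesis using m by simp
qed

section \<open>Potentials on a tree\<close>

fun step_ratio :: "(nat \<Rightarrow> nat \<Rightarrow> real) \<Rightarrow> nat + nat \<Rightarrow> nat + nat \<Rightarrow> real" where
  "step_ratio mu (Inl i) (Inr j) = mu i j"
| "step_ratio mu (Inr j) (Inl i) = 1 / mu i j"
| "step_ratio mu _ _ = 1"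

fun walk_ratio :: "(nat \<Rightarrow> nat \<Rightarrow> real) \<Rightarrow> (nat + nat) list \<Rightarrow> real" where
  "walk_ratio mu (x # y # vs) = step_ratio mu x y * walk_ratio mu (y # vs)"
| "walk_ratio mu _ = 1"

lemma walk_ratio_snoc:
  "vs \<noteq> [] \<Longrightarrow> walk_ratio mu (vs @ [y]) = walk_ratio mu vs * step_ratio mu (last vs) y"
  by (induction mu vs rule: walk_ratio.induct) auto

lemma walk_ratio_pos:
  assumes "successively (graph_adj E) vs" "\<forall>(i, j) \<in> E. 0 < mu i j"
  shows "0 < walk_ratio mu vs"
  using assms
proof (induction mu vs rule: walk_ratio.induct)
  case (1 mu x y vs)
  then have "0 < step_ratio mu x y" by (cases x; cases y) auto
  with 1 show ?case by simp
qed simp_all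

locale tree_network =
  fixes nI nJ :: nat and E :: "(nat \<times> nat) set" and mu :: "nat \<Rightarrow> nat \<Rightarrow> real"
  assumes tree: "is_tree nI nJ E"
    and classes_nonempty: "1 \<le> nI"
    and mu_pos: "\<forall>(i, j) \<in> E. 0 < mu i j"
begin

lemma edges_bounded: "E \<subseteq> {..<nI} \<times> {..<nJ}"
  and connected: "graph_connected nI nJ E"
  and acyclic: "graph_acyclic E"
  using tree by (simp_all add: is_tree_def)

lemma class_vertex: "i < nI \<Longrightarrow> Inl i \<in> graph_vertices nI nJ"
  and pool_vertex: "j < nJ \<Longrightarrow> Inr j \<in> graph_vertices nI nJ"
  by (simp_all add: graph_vertices_def)

lemma reachable:
  "u \<in> graph_vertices nI nJ \<Longrightarrow> u' \<in> graph_vertices nI nJ \<Longrightarrow> (graph_adj E)\<^sup>*\<^sup>* u u'"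
  using connected by (simp add: graph_connected_def)

lemma reachable_from_root: "u \<in> graph_vertices nI nJ \<Longrightarrow> (graph_adj E)\<^sup>*\<^sup>* (Inl 0) u"
  using reachable class_vertex classes_nonempty by simp

definition root_path :: "nat + nat \<Rightarrow> (nat + nat) list" where
  "root_path u = (THE vs. walk E vs \<and> distinct vs \<and> hd vs = Inl 0 \<and> last vs = u)"

lemma root_path_unique:
  assumes "u \<in> graph_vertices nI nJ"
  shows "\<exists>!vs. walk E vs \<and> distinct vs \<and> hd vs = Inl 0 \<and> last vs = u"
proof -
  obtain vs where "walk E vs" "hd vs = Inl 0" "last vs = u"
    using walk_if_rtranclp[OF reachable_from_root[OF assms]] by blast
  then obtain vs' where "walk E vs' \<and> distinct vs' \<and> hd vs' = Inl 0 \<and> last vs' = u"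
    using distinct_walk_exists by fastforce
  then show ?thesis
    using acyclic_distinct_walk_unique[OF acyclic] by (intro ex1I[of _ vs']) auto
qed

lemma root_path:
  assumes "u \<in> graph_vertices nI nJ"
  shows "walk E (root_path u)" "distinct (root_path u)"
    "hd (root_path u) = Inl 0" "last (root_path u) = u"
  using theI'[OF root_path_unique[OF assms]] by (simp_all add: root_path_def)

lemma root_path_eqI:
  assumes "u \<in> graph_vertices nI nJ" "walk E vs" "distinct vs" "hd vs = Inl 0" "last vs = u"
  shows "root_path u = vs"
  unfolding root_path_def using the1_equality[OF root_path_unique[OF assms(1)]] assms(2-5) by blast

lemma root_path_snoc:
  assumes "u \<in> graph_vertices nI nJ" "v \<in> graph_vertices nI nJ"
    and "graph_adj E u v" "v \<notin> set (root_path u)"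
  shows "root_path v = root_path u @ [v]"
proof (rule root_path_eqI[OF assms(2)])
  have "root_path u \<noteq> []" using root_path(1)[OF assms(1)] by (simp add: walk_def)
  then show "hd (root_path u @ [v]) = Inl 0" using root_path(3)[OF assms(1)] by simp
qed (use root_path[OF assms(1)] assms(3,4) in \<open>simp_all add: walk_snoc\<close>)

lemma root_path_prefix:
  assumes "u \<in> graph_vertices nI nJ" "v \<in> graph_vertices nI nJ" "root_path u = Q @ v # R"
  shows "root_path v = Q @ [v]"
proof (rule root_path_eqI[OF assms(2)])
  show "walk E (Q @ [v])"
    using root_path(1)[OF assms(1)] assms(3) walk_appendD[of E "Q @ [v]" R] by simp
  show "hd (Q @ [v]) = Inl 0"
    using root_path(3)[OF assms(1)] assms(3) by (cases Q) simp_all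
qed (use root_path(2)[OF assms(1)] assms(3) in simp_all)

definition potential :: "nat + nat \<Rightarrow> real" where
  "potential u = walk_ratio mu (root_path u)"

lemma potential_pos:
  assumes "u \<in> graph_vertices nI nJ"
  shows "0 < potential u"
proof -
  have "successively (graph_adj E) (root_path u)"
    using root_path(1)[OF assms] by (simp add: walk_def)
  then show ?thesis unfolding potential_def by (rule walk_ratio_pos[OF _ mu_pos])
qed

lemma potential_edge:
  assumes e: "(i, j) \<in> E"
  shows "potential (Inr j) = potential (Inl i) * mu i j"
proof -
  have i: "Inl i \<in> graph_vertices nI nJ" and j: "Inr j \<in> graph_vertices nI nJ"
    using e edges_bounded class_vertex pool_vertex by auto
  show ?thesis
  proof (cases "Inr j \<in> set (root_path (Inl i))")
    case False
    then have "root_path (Inr j) = root_path (Inl i) @ [Inr j]"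
      using root_path_snoc[OF i j] e by simp
    then show ?thesis
      using walk_ratio_snoc[of "root_path (Inl i)" mu "Inr j"] root_path[OF i]
      by (simp add: potential_def walk_def)
  next
    case True
    then obtain Q R where QR: "root_path (Inl i) = Q @ Inr j # R" by (meson split_list)
    then have j_path: "root_path (Inr j) = Q @ [Inr j]"
      using root_path_prefix[OF i j] by simp
    from QR root_path(4)[OF i] have "R \<noteq> []" "last R = Inl i"
      by (cases R rule: rev_cases; simp)+
    then have "Inl i \<in> set R" by (metis last_in_set)
    then have "Inl i \<notin> set (root_path (Inr j))"
      using root_path(2)[OF i] QR j_path by auto
    then have "root_path (Inl i) = root_path (Inr j) @ [Inl i]"
      using root_path_snoc[OF j i] e by simp
    then have "potential (Inl i) = potential (Inr j) / mu i j"
      using walk_ratio_snoc[of "root_path (Inr j)" mu "Inl i"] j_path by (simp add: potential_def)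
    then show ?thesis using mu_pos e by auto
  qed
qed

lemma potential_edge_ratio:
  "(a, b) \<in> E \<Longrightarrow> 0 < potential (Inl a) \<and> 0 < mu a b \<and> potential (Inr b) = potential (Inl a) * mu a b"
  using potential_edge potential_pos class_vertex edges_bounded mu_pos by blast

lemma gain_cp_eq:
  assumes "i < nI" "j < nJ"
  shows "gain_cp E mu i j = potential (Inr j) / potential (Inl i)"
proof -
  obtain m as bs where "cp_path E i j m as bs" and gain:
    "gain_cp E mu i j =
      mu (as ! 0) (bs ! 0) * (\<Prod>k \<in> {1..<m}. mu (as ! k) (bs ! k) / mu (as ! k) (bs ! (k - 1)))"
    using gain_cp_path_product[OF acyclic reachable[OF class_vertex pool_vertex]] assms .
  then show ?thesis
    using cp_path_product_telescope[of E i j m as bs "\<lambda>a. potential (Inl a)" mu "\<lambda>b. potential (Inr b)"]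
      potential_edge_ratio by simp
qed

lemma gain_cc_eq:
  assumes "i < nI" "i' < nI"
  shows "gain_cc E mu i i' = potential (Inl i') / potential (Inl i)"
proof (cases "i = i'")
  case True
  then show ?thesis using potential_pos[OF class_vertex[OF assms(1)]] by (simp add: gain_cc_def)
next
  case False
  obtain m as bs where "cc_path E i i' m as bs" and
    "gain_cc E mu i i' = (\<Prod>k < m - 1. mu (as ! k) (bs ! k) / mu (as ! (k + 1)) (bs ! k))"
    using gain_cc_path_product[OF acyclic reachable[OF class_vertex class_vertex] False] assms .
  then show ?thesis
    using cc_path_product_telescope[of E i i' m as bs "\<lambda>a. potential (Inl a)" mu "\<lambda>b. potential (Inr b)"]
      False potential_edge_ratio by simp
qed

end

section \<open>Flows and the SWSS program\<close>

abbreviation pools_of :: "nat \<Rightarrow> (nat \<times> nat) set \<Rightarrow> nat \<Rightarrow> nat set" where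
  "pools_of nJ E i \<equiv> {j. j < nJ \<and> (i, j) \<in> E}"

abbreviation classes_of :: "nat \<Rightarrow> (nat \<times> nat) set \<Rightarrow> nat \<Rightarrow> nat set" where
  "classes_of nI E j \<equiv> {i. i < nI \<and> (i, j) \<in> E}"

definition step_flow :: "nat + nat \<Rightarrow> nat + nat \<Rightarrow> nat \<Rightarrow> nat \<Rightarrow> real" where
  "step_flow x y i j = of_bool (x = Inr j \<and> y = Inl i) - of_bool (x = Inl i \<and> y = Inr j)"

fun walk_flow :: "(nat + nat) list \<Rightarrow> nat \<Rightarrow> nat \<Rightarrow> real" where
  "walk_flow (x # y # vs) i j = step_flow x y i j + walk_flow (y # vs) i j"
| "walk_flow _ i j = 0"

lemma walk_flow_nonedge:
  "successively (graph_adj E) vs \<Longrightarrow> (i, j) \<notin> E \<Longrightarrow> walk_flow vs i j = 0"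
proof (induction vs i j rule: walk_flow.induct)
  case (1 x y vs i j)
  then have "step_flow x y i j = 0" by (cases x; cases y) (auto simp: step_flow_def)
  with 1 show ?case by simp
qed simp_all

lemma sum_of_bool_conj_eq:
  "finite A \<Longrightarrow> (\<Sum>j \<in> A. of_bool (P \<and> j = b) :: 'a :: comm_ring_1) = of_bool (P \<and> b \<in> A)"
  by (cases P) (simp_all add: of_bool_def)

lemma step_flow_row_sum:
  assumes "E \<subseteq> {..<nI} \<times> {..<nJ}" "graph_adj E x y"
  shows "(\<Sum>j \<in> pools_of nJ E i. step_flow x y i j) = of_bool (y = Inl i) - of_bool (x = Inl i)"
proof -
  obtain a b where "(a, b) \<in> E" and xy: "x = Inl a \<and> y = Inr b \<or> x = Inr b \<and> y = Inl a"
    using assms(2) by (cases x; cases y) auto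
  with assms(1) have "x = Inl i \<or> y = Inl i \<Longrightarrow> b \<in> pools_of nJ E i" by auto
  moreover have "step_flow x y i j = of_bool (y = Inl i \<and> j = b) - of_bool (x = Inl i \<and> j = b)" for j
    using xy by (elim disjE) (auto simp: step_flow_def)
  then have "(\<Sum>j \<in> pools_of nJ E i. step_flow x y i j) =
      of_bool (y = Inl i \<and> b \<in> pools_of nJ E i) - of_bool (x = Inl i \<and> b \<in> pools_of nJ E i)"
    by (simp add: sum_subtractf sum_of_bool_conj_eq del: sum_of_bool_eq)
  ultimately show ?thesis by auto
qed

lemma step_flow_col_sum:
  assumes "E \<subseteq> {..<nI} \<times> {..<nJ}" "graph_adj E x y"
  shows "(\<Sum>i \<in> classes_of nI E j. step_flow x y i j) = of_bool (x = Inr j) - of_bool (y = Inr j)"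
proof -
  obtain a b where "(a, b) \<in> E" and xy: "x = Inl a \<and> y = Inr b \<or> x = Inr b \<and> y = Inl a"
    using assms(2) by (cases x; cases y) auto
  with assms(1) have "x = Inr j \<or> y = Inr j \<Longrightarrow> a \<in> classes_of nI E j" by auto
  moreover have "step_flow x y i j = of_bool (x = Inr j \<and> i = a) - of_bool (y = Inr j \<and> i = a)" for i
    using xy by (elim disjE) (auto simp: step_flow_def)
  then have "(\<Sum>i \<in> classes_of nI E j. step_flow x y i j) =
      of_bool (x = Inr j \<and> a \<in> classes_of nI E j) - of_bool (y = Inr j \<and> a \<in> classes_of nI E j)"
    by (simp add: sum_subtractf sum_of_bool_conj_eq del: sum_of_bool_eq)
  ultimately show ?thesis by auto
qed

lemma walk_flow_row_sum:
  assumes "E \<subseteq> {..<nI} \<times> {..<nJ}" "walk E vs"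
  shows "(\<Sum>j \<in> pools_of nJ E i. walk_flow vs i j) = of_bool (last vs = Inl i) - of_bool (hd vs = Inl i)"
  using assms(2) unfolding walk_def
proof (induction vs rule: induct_list012)
  case (3 x y vs)
  then have "graph_adj E x y" "successively (graph_adj E) (y # vs)" by simp_all
  with 3(2) step_flow_row_sum[OF assms(1)] show ?case by (simp add: sum.distrib)
qed simp_all

lemma walk_flow_col_sum:
  assumes "E \<subseteq> {..<nI} \<times> {..<nJ}" "walk E vs"
  shows "(\<Sum>i \<in> classes_of nI E j. walk_flow vs i j) = of_bool (hd vs = Inr j) - of_bool (last vs = Inr j)"
  using assms(2) unfolding walk_def
proof (induction vs rule: induct_list012)
  case (3 x y vs)
  then have "graph_adj E x y" "successively (graph_adj E) (y # vs)" by simp_all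
  with 3(2) step_flow_col_sum[OF assms(1)] show ?case by (simp add: sum.distrib)
qed simp_all

lemma sum_pools_classes_swap:
  "(\<Sum>i<nI. \<Sum>j \<in> pools_of nJ E i. g i j) = (\<Sum>j<nJ. \<Sum>i \<in> classes_of nI E j. g i j)"
  using sum.swap_restrict[of "{..<nI}" "{..<nJ}" g "\<lambda>i j. (i, j) \<in> E"] by simp

lemma connected_root_walks:
  assumes "graph_connected nI nJ E" "1 \<le> nI"
  obtains wk where
    "\<And>i. i < nI \<Longrightarrow> walk E (wk (Inl i)) \<and> hd (wk (Inl i)) = Inl 0 \<and> last (wk (Inl i)) = Inl i"
    "\<And>j. j < nJ \<Longrightarrow> walk E (wk (Inr j)) \<and> hd (wk (Inr j)) = Inl 0 \<and> last (wk (Inr j)) = Inr j"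
proof -
  have "\<exists>vs. walk E vs \<and> hd vs = Inl 0 \<and> last vs = u" if "u \<in> graph_vertices nI nJ" for u
  proof (rule walk_if_rtranclp)
    show "(graph_adj E)\<^sup>*\<^sup>* (Inl 0) u"
      using assms that by (simp add: graph_connected_def graph_vertices_def)
  qed
  then obtain wk where "\<And>u. u \<in> graph_vertices nI nJ \<Longrightarrow>
      walk E (wk u) \<and> hd (wk u) = Inl 0 \<and> last (wk u) = u"
    by metis
  then show thesis by (intro that[of wk]) (simp_all add: graph_vertices_def)
qed

text \<open>Superpose the unit flows of walks from the root class 0 to every vertex.\<close>

lemma bipartite_flow_exists:
  fixes a b :: "nat \<Rightarrow> real"
  assumes sub: "E \<subseteq> {..<nI} \<times> {..<nJ}" and conn: "graph_connected nI nJ E" and "1 \<le> nI"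
    and balance: "(\<Sum>i<nI. a i) = (\<Sum>j<nJ. b j)"
  obtains \<phi> where "\<And>i j. (i, j) \<notin> E \<Longrightarrow> \<phi> i j = 0"
    and "\<And>i. i < nI \<Longrightarrow> (\<Sum>j \<in> pools_of nJ E i. \<phi> i j) = a i"
    and "\<And>j. j < nJ \<Longrightarrow> (\<Sum>i \<in> classes_of nI E j. \<phi> i j) = b j"
proof -
  obtain wk where
    class_walk: "\<And>i. i < nI \<Longrightarrow> walk E (wk (Inl i)) \<and> hd (wk (Inl i)) = Inl 0 \<and> last (wk (Inl i)) = Inl i"
    and pool_walk: "\<And>j. j < nJ \<Longrightarrow> walk E (wk (Inr j)) \<and> hd (wk (Inr j)) = Inl 0 \<and> last (wk (Inr j)) = Inr j"
    using connected_root_walks[OF conn \<open>1 \<le> nI\<close>] by blast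
  define \<phi> where "\<phi> i j =
    (\<Sum>i'<nI. a i' * walk_flow (wk (Inl i')) i j) - (\<Sum>j'<nJ. b j' * walk_flow (wk (Inr j')) i j)"
    for i j
  show thesis
  proof (rule that)
    fix i j assume "(i, j) \<notin> E"
    have "walk_flow (wk (Inl i')) i j = 0" if "i' < nI" for i'
      using class_walk[OF that] \<open>(i, j) \<notin> E\<close> by (intro walk_flow_nonedge) (simp_all add: walk_def)
    moreover have "walk_flow (wk (Inr j')) i j = 0" if "j' < nJ" for j'
      using pool_walk[OF that] \<open>(i, j) \<notin> E\<close> by (intro walk_flow_nonedge) (simp_all add: walk_def)
    ultimately show "\<phi> i j = 0" by (simp add: \<phi>_def)
  next
    fix i assume "i < nI"
    have "(\<Sum>j \<in> pools_of nJ E i. \<phi> i j) =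
        (\<Sum>i'<nI. a i' * (\<Sum>j \<in> pools_of nJ E i. walk_flow (wk (Inl i')) i j)) -
        (\<Sum>j'<nJ. b j' * (\<Sum>j \<in> pools_of nJ E i. walk_flow (wk (Inr j')) i j))"
      by (simp add: \<phi>_def sum_subtractf sum_distrib_left sum.swap[of _ "pools_of nJ E i"])
    also have "\<dots> = (\<Sum>i'<nI. a i' * (of_bool (i' = i) - of_bool (0 = i))) -
        (\<Sum>j'<nJ. b j' * (- of_bool (0 = i)))"
      using walk_flow_row_sum[OF sub] class_walk pool_walk by simp
    also have "\<dots> = a i - of_bool (0 = i) * ((\<Sum>i'<nI. a i') - (\<Sum>j'<nJ. b j'))"
      using \<open>i < nI\<close> by (simp add: algebra_simps sum_subtractf sum_distrib_right sum_negf)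
    finally show "(\<Sum>j \<in> pools_of nJ E i. \<phi> i j) = a i" using balance by simp
  next
    fix j assume "j < nJ"
    have "(\<Sum>i \<in> classes_of nI E j. \<phi> i j) =
        (\<Sum>i'<nI. a i' * (\<Sum>i \<in> classes_of nI E j. walk_flow (wk (Inl i')) i j)) -
        (\<Sum>j'<nJ. b j' * (\<Sum>i \<in> classes_of nI E j. walk_flow (wk (Inr j')) i j))"
      by (simp add: \<phi>_def sum_subtractf sum_distrib_left sum.swap[of _ "classes_of nI E j"])
    also have "\<dots> = (\<Sum>j'<nJ. b j' * of_bool (j' = j))"
      using walk_flow_col_sum[OF sub] class_walk pool_walk by (simp add: sum_negf)
    finally show "(\<Sum>i \<in> classes_of nI E j. \<phi> i j) = b j" using \<open>j < nJ\<close> by simp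
  qed
qed

lemma swss_weak_duality:
  fixes w v :: "nat \<Rightarrow> real"
  assumes w_nonneg: "\<And>i. i < nI \<Longrightarrow> 0 \<le> w i"
    and edge: "\<And>i j. (i, j) \<in> E \<Longrightarrow> v j = w i * mu i j"
    and feasible: "swss_feasible nI nJ E mu lam_hat th p vt \<kappa>"
  shows "vt * (\<Sum>i<nI. w i * p i) \<le> (\<Sum>j<nJ. v j * th j) - (\<Sum>i<nI. w i * lam_hat i)"
proof -
  define x where "x i = (\<Sum>j \<in> pools_of nJ E i. mu i j * \<kappa> i j)" for i
  have row: "\<And>i. i < nI \<Longrightarrow> lam_hat i \<le> x i - vt * p i"
    and col: "\<And>j. j < nJ \<Longrightarrow> (\<Sum>i \<in> classes_of nI E j. \<kappa> i j) = th j"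
    using feasible by (simp_all add: swss_feasible_def x_def)
  have "w i * x i = (\<Sum>j \<in> pools_of nJ E i. v j * \<kappa> i j)" for i
    unfolding x_def sum_distrib_left by (rule sum.cong) (simp_all add: edge[symmetric] flip: mult.assoc)
  then have "(\<Sum>i<nI. w i * x i) = (\<Sum>i<nI. \<Sum>j \<in> pools_of nJ E i. v j * \<kappa> i j)"
    by simp
  also have "\<dots> = (\<Sum>j<nJ. v j * th j)"
    by (simp add: sum_pools_classes_swap col flip: sum_distrib_left)
  finally have "(\<Sum>i<nI. w i * x i) = (\<Sum>j<nJ. v j * th j)" .
  moreover have "(\<Sum>i<nI. w i * lam_hat i) \<le> (\<Sum>i<nI. w i * (x i - vt * p i))"
    by (intro sum_mono mult_left_mono) (simp_all add: row w_nonneg)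
  ultimately show ?thesis
    by (simp add: right_diff_distrib sum_subtractf sum_distrib_left algebra_simps)
qed

lemma swss_feasible_exists:
  fixes w v :: "nat \<Rightarrow> real"
  assumes sub: "E \<subseteq> {..<nI} \<times> {..<nJ}" and conn: "graph_connected nI nJ E" and "1 \<le> nI"
    and w_pos: "\<And>i. i < nI \<Longrightarrow> 0 < w i" and v_pos: "\<And>j. j < nJ \<Longrightarrow> 0 < v j"
    and edge: "\<And>i j. (i, j) \<in> E \<Longrightarrow> v j = w i * mu i j"
    and balance: "vt * (\<Sum>i<nI. w i * p i) = (\<Sum>j<nJ. v j * th j) - (\<Sum>i<nI. w i * lam_hat i)"
  shows "\<exists>\<kappa>. swss_feasible nI nJ E mu lam_hat th p vt \<kappa>"
proof -
  have supply_demand: "(\<Sum>i<nI. w i * (lam_hat i + vt * p i)) = (\<Sum>j<nJ. v j * th j)"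
    using balance by (simp add: algebra_simps sum.distrib sum_distrib_left)
  obtain \<phi> where nonedge: "\<And>i j. (i, j) \<notin> E \<Longrightarrow> \<phi> i j = 0"
    and row: "\<And>i. i < nI \<Longrightarrow> (\<Sum>j \<in> pools_of nJ E i. \<phi> i j) = w i * (lam_hat i + vt * p i)"
    and col: "\<And>j. j < nJ \<Longrightarrow> (\<Sum>i \<in> classes_of nI E j. \<phi> i j) = v j * th j"
    by (rule bipartite_flow_exists[OF sub conn \<open>1 \<le> nI\<close> supply_demand]) blast
  have "swss_feasible nI nJ E mu lam_hat th p vt (\<lambda>i j. \<phi> i j / v j)"
    unfolding swss_feasible_def
  proof (intro conjI allI impI)
    fix i assume "i < nI"
    have "(\<Sum>j \<in> pools_of nJ E i. mu i j * (\<phi> i j / v j)) = (\<Sum>j \<in> pools_of nJ E i. \<phi> i j / w i)"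
    proof (rule sum.cong)
      fix j assume "j \<in> pools_of nJ E i"
      then have "v j = w i * mu i j" "0 < v j" "0 < w i"
        using edge v_pos w_pos \<open>i < nI\<close> by auto
      then have "v j = w i * mu i j" "mu i j \<noteq> 0" "w i \<noteq> 0" by auto
      then show "mu i j * (\<phi> i j / v j) = \<phi> i j / w i" by (simp add: field_simps)
    qed simp
    also have "\<dots> = lam_hat i + vt * p i"
      using row[OF \<open>i < nI\<close>] w_pos[OF \<open>i < nI\<close>] by (simp flip: sum_divide_distrib)
    finally show "lam_hat i \<le> (\<Sum>j \<in> pools_of nJ E i. mu i j * (\<phi> i j / v j)) - vt * p i" by simp
  next
    fix j assume "j < nJ"
    then show "(\<Sum>i \<in> classes_of nI E j. \<phi> i j / v j) = th j"
      using col[OF \<open>j < nJ\<close>] v_pos[OF \<open>j < nJ\<close>] by (simp flip: sum_divide_distrib)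
  qed (simp add: nonedge)
  then show ?thesis by blast
qed

context tree_network
begin

lemma swss_param_eq:
  assumes p_pos: "\<And>i. i < nI \<Longrightarrow> 0 < p i"
  shows "swss_param nI nJ E mu lam_hat th p =
    ((\<Sum>j<nJ. potential (Inr j) * th j) - (\<Sum>i<nI. potential (Inl i) * lam_hat i))
      / (\<Sum>i<nI. potential (Inl i) * p i)"
    (is "_ = (?C - ?L) / ?P")
proof -
  have w_pos: "\<And>i. i < nI \<Longrightarrow> 0 < potential (Inl i)"
    and v_pos: "\<And>j. j < nJ \<Longrightarrow> 0 < potential (Inr j)"
    using potential_pos class_vertex pool_vertex by auto
  have "0 < ?P"
    using w_pos p_pos classes_nonempty by (intro sum_pos) (auto simp: lessThan_empty_iff)
  then have balance: "(?C - ?L) / ?P * ?P = ?C - ?L" by simp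
  show ?thesis unfolding swss_param_def
  proof (rule cSup_eq_maximum)
    show "(?C - ?L) / ?P \<in> {vt. \<exists>\<kappa>. swss_feasible nI nJ E mu lam_hat th p vt \<kappa>}"
      using swss_feasible_exists[OF edges_bounded connected classes_nonempty w_pos v_pos
          potential_edge balance] by simp
  next
    fix vt assume "vt \<in> {vt. \<exists>\<kappa>. swss_feasible nI nJ E mu lam_hat th p vt \<kappa>}"
    then have "vt * ?P \<le> ?C - ?L"
      using swss_weak_duality[of nI "\<lambda>i. potential (Inl i)" E "\<lambda>j. potential (Inr j)"]
        w_pos potential_edge by (fastforce simp: less_imp_le)
    with \<open>0 < ?P\<close> show "vt \<le> (?C - ?L) / ?P" by (simp add: field_simps)
  qed
qed

lemma gain_combination_eq:
  assumes "i < nI"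
  shows "(\<Sum>j<nJ. gain_cp E mu i j * th j) - (\<Sum>l<nI. gain_cc E mu i l * lam_hat l) =
    ((\<Sum>j<nJ. potential (Inr j) * th j) - (\<Sum>l<nI. potential (Inl l) * lam_hat l)) / potential (Inl i)"
proof -
  have "(\<Sum>j<nJ. gain_cp E mu i j * th j) = (\<Sum>j<nJ. potential (Inr j) * th j) / potential (Inl i)"
    unfolding sum_divide_distrib by (rule sum.cong) (simp_all add: gain_cp_eq assms)
  moreover have "(\<Sum>l<nI. gain_cc E mu i l * lam_hat l) =
      (\<Sum>l<nI. potential (Inl l) * lam_hat l) / potential (Inl i)"
    unfolding sum_divide_distrib by (rule sum.cong) (simp_all add: gain_cc_eq assms)
  ultimately show ?thesis by (simp add: diff_divide_distrib)
qed

end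

theorem corollary1:
  fixes nI nJ :: nat
    and E :: "(nat \<times> nat) set"
    and lamn :: "nat \<Rightarrow> nat \<Rightarrow> real"
    and mun :: "nat \<Rightarrow> nat \<Rightarrow> nat \<Rightarrow> real"
    and Nn :: "nat \<Rightarrow> nat \<Rightarrow> nat"
    and lam nu lam_hat nu_hat :: "nat \<Rightarrow> real"
    and mu mu_hat :: "nat \<Rightarrow> nat \<Rightarrow> real"
    and \<xi>s :: "nat \<Rightarrow> nat \<Rightarrow> real"
    and p :: "nat \<Rightarrow> real"
  assumes nI_pos: "nI \<ge> 1" and nJ_pos: "nJ \<ge> 1"
    and tree: "is_tree nI nJ E"
    and lamn_pos: "\<forall>n \<ge> 1. \<forall>i < nI. lamn n i > 0"
    and mun_pos: "\<forall>n \<ge> 1. \<forall>(i, j) \<in> E. mun n i j > 0"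
    and lam_pos: "\<forall>i < nI. lam i > 0"
    and nu_pos: "\<forall>j < nJ. nu j > 0"
    and mu_pos: "\<forall>(i, j) \<in> E. mu i j > 0"
    and lim_lam: "\<forall>i < nI. (\<lambda>n. lamn n i / real n) \<longlonglongrightarrow> lam i"
    and lim_N: "\<forall>j < nJ. (\<lambda>n. real (Nn n j) / real n) \<longlonglongrightarrow> nu j"
    and lim_mu: "\<forall>(i, j) \<in> E. (\<lambda>n. mun n i j) \<longlonglongrightarrow> mu i j"
    and lim_lam_hat: "\<forall>i < nI. (\<lambda>n. (lamn n i - real n * lam i) / sqrt (real n)) \<longlonglongrightarrow> lam_hat i"
    and lim_mu_hat: "\<forall>(i, j) \<in> E. (\<lambda>n. sqrt (real n) * (mun n i j - mu i j)) \<longlonglongrightarrow> mu_hat i j"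
    and lim_nu_hat: "\<forall>j < nJ. (\<lambda>n. sqrt (real n) * (real (Nn n j) / real n - nu j)) \<longlonglongrightarrow> nu_hat j"
    and crp_opt: "crp_optimal nI nJ E mu nu lam \<xi>s"
    and crp_unique: "\<forall>\<xi>. crp_optimal nI nJ E mu nu lam \<xi> \<longrightarrow> (\<forall>i < nI. \<forall>j < nJ. \<xi> i j = \<xi>s i j)"
    and crp_sum: "\<forall>j < nJ. (\<Sum>i < nI. \<xi>s i j) = 1"
    and crp_pos: "\<forall>(i, j) \<in> E. \<xi>s i j > 0"
    and p_pos: "\<forall>i < nI. p i > 0"
    and p_sum: "(\<Sum>i < nI. p i) = 1"
    and nonzero: "swss_param nI nJ E mu lam_hat (theta_param nI E mu nu mu_hat nu_hat \<xi>s) p \<noteq> 0"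
  shows "(\<forall>i < nI. ((\<Sum>j < nJ. gain_cp E mu i j * theta_param nI E mu nu mu_hat nu_hat \<xi>s j)
                     - (\<Sum>l < nI. gain_cc E mu i l * lam_hat l)) / p i \<noteq> 0)
       \<and> 1 / swss_param nI nJ E mu lam_hat (theta_param nI E mu nu mu_hat nu_hat \<xi>s) p
         = (\<Sum>i < nI. 1 / (((\<Sum>j < nJ. gain_cp E mu i j * theta_param nI E mu nu mu_hat nu_hat \<xi>s j)
                     - (\<Sum>l < nI. gain_cc E mu i l * lam_hat l)) / p i))"
proof -
  interpret tree_network nI nJ E mu
    using tree nI_pos mu_pos by unfold_locales
  let ?th = "theta_param nI E mu nu mu_hat nu_hat \<xi>s"
  let ?R = "\<lambda>i. ((\<Sum>j<nJ. gain_cp E mu i j * ?th j) - (\<Sum>l<nI. gain_cc E mu i l * lam_hat l)) / p i"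
  let ?w = "\<lambda>i. potential (Inl i) * p i"
  define D where "D = (\<Sum>j<nJ. potential (Inr j) * ?th j) - (\<Sum>l<nI. potential (Inl l) * lam_hat l)"
  have swss: "swss_param nI nJ E mu lam_hat ?th p = D / (\<Sum>i<nI. ?w i)"
    unfolding D_def using p_pos by (intro swss_param_eq) auto
  have R: "?R i = D / ?w i" if "i < nI" for i
    using gain_combination_eq[OF that] by (simp add: D_def)
  have "D \<noteq> 0" using nonzero swss by auto
  moreover have "?w i \<noteq> 0" if "i < nI" for i
    using potential_pos[OF class_vertex] p_pos that by (simp add: less_imp_neq[symmetric])
  ultimately have "\<forall>i < nI. ?R i \<noteq> 0" using R by simp
  moreover have "1 / swss_param nI nJ E mu lam_hat ?th p = (\<Sum>i<nI. 1 / ?R i)"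
    unfolding swss using R by (simp add: sum_divide_distrib)
  ultimately show ?thesis by blast
qed

end
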